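(* Let $\mathcal{X}\subset\mathbb{R}^d$, $\mathcal{Y}=\{1,\dots,K\}$ with $K\ge 2$, let $\mathcal{H}$ be a class of classifiers $h:\mathcal{X}\to\mathcal{Y}$, and let $Q$ be any probability distribution on $\mathcal{H}$. Let $P$ be any joint distribution of $(\mathbf{X},Y)$ on $\mathcal{X}\times\mathcal{Y}$. Let $M$ be a real random variable such that, conditionally on $\mathbf{X}=\mathbf{x}$, $M$ is discrete and equals the margin $M_Q(\mathbf{x},i)$ with probability $P(Y=i\mid \mathbf{X}=\mathbf{x})$, for $i=1,\dots,K$ (equivalently, $M=M_Q(\mathbf{X},Y)$). Let $\mu^M_1=\mathbb{E}[M]$ and $\mu^M_2=\mathbb{E}[M^2]$. If $\mu^M_1>0$, then $$R(B_Q)\le 1-\frac{(\mu^M_1)^2}{\mu^M_2}.$$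
   Context: For $\mathbf{x}\in\mathcal{X}$ and $c\in\mathcal{Y}$, the vote is $v_Q(\mathbf{x},c)=\mathbb{E}_{h\sim Q}\,\mathbb{1}[h(\mathbf{x})=c]$. The Bayes (majority vote) classifier is $B_Q(\mathbf{x})\in\arg\max_{c\in\mathcal{Y}} v_Q(\mathbf{x},c)$ (ties broken arbitrarily). The margin is $M_Q(\mathbf{x},y)=v_Q(\mathbf{x},y)-\max_{c\in\mathcal{Y},c\neq y}v_Q(\mathbf{x},c)$. The risk of $B_Q$ is $R(B_Q)=\mathbb{E}_{\mathbf{X}}\big[\sum_{i\in\mathcal{Y},\, i\neq B_Q(\mathbf{X})}P(Y=i\mid\mathbf{X})\big]=P(B_Q(\mathbf{X})\neq Y)$. *)

theory Defs
  imports "HOL-Probability.Probability"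
begin

definition vote :: "('x \<Rightarrow> nat) measure \<Rightarrow> 'x \<Rightarrow> nat \<Rightarrow> real" where
  "vote Q x c = measure Q {h \<in> space Q. h x = c}"

definition margin :: "('x \<Rightarrow> nat) measure \<Rightarrow> nat \<Rightarrow> 'x \<Rightarrow> nat \<Rightarrow> real" where
  "margin Q K x y = vote Q x y - Max ((\<lambda>c. vote Q x c) ` ({1..K} - {y}))"

definition is_majority_vote ::
  "('x \<Rightarrow> nat) measure \<Rightarrow> nat \<Rightarrow> 'x set \<Rightarrow> ('x \<Rightarrow> nat) \<Rightarrow> bool" where
  "is_majority_vote Q K Xs B \<longleftrightarrow>
     (\<forall>x\<in>Xs. B x \<in> {1..K} \<and> (\<forall>c\<in>{1..K}. vote Q x c \<le> vote Q x (B x)))"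

end

theory Submission
  imports Defs
begin

text \<open>A misclassified pair has non-positive margin, so the risk is at most P(M \<le> 0).
  The second-moment method bounds P(M > 0) from below: integrating the pointwise AM-GM
  bound M \<le> M^2/(2t) + (t/2) 1[M > 0] and choosing t = E[M^2]/E[M] gives
  E[M]^2 \<le> E[M^2] P(M > 0).\<close>

lemma amgm_le_indicator_pos:
  fixes u t :: real
  assumes "t > 0"
  shows "u \<le> u\<^sup>2 / (2*t) + t/2 * (if u > 0 then 1 else 0)"
proof (cases "u > 0")
  case True
  have "2*t*u \<le> u\<^sup>2 + t*t"
    using zero_le_power2[of "u - t"] by (simp add: power2_eq_square algebra_simps)
  with True assms show ?thesis by (simp add: field_simps)
next
  case False
  moreover have "0 \<le> u\<^sup>2 / (2*t)" using assms by simp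
  ultimately show ?thesis by simp
qed

lemma (in prob_space) expectation_le_second_moment_prob_pos:
  fixes f :: "'a \<Rightarrow> real"
  assumes f: "integrable M f" and f2: "integrable M (\<lambda>x. (f x)\<^sup>2)" and t: "t > 0"
  shows "expectation f \<le> expectation (\<lambda>x. (f x)\<^sup>2) / (2*t) + t/2 * prob {x\<in>space M. f x > 0}"
proof -
  let ?A = "{x\<in>space M. f x > 0}"
  have A: "?A \<in> events" using borel_measurable_integrable[OF f] by measurable
  then have iA: "integrable M (indicator ?A :: _ \<Rightarrow> real)"
    by (simp add: emeasure_eq_measure)
  have "f x \<le> (f x)\<^sup>2 / (2*t) + t/2 * indicator ?A x" if "x \<in> space M" for x
  proof -
    have "indicator ?A x = (if f x > 0 then 1 else 0 :: real)" using that by simp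
    then show ?thesis using amgm_le_indicator_pos[OF t, of "f x"] by simp
  qed
  then have "expectation f \<le> expectation (\<lambda>x. (f x)\<^sup>2 / (2*t) + t/2 * indicator ?A x)"
    using f f2 iA by (intro integral_mono) auto
  also have "\<dots> = expectation (\<lambda>x. (f x)\<^sup>2) / (2*t) + t/2 * prob ?A"
    using f2 iA A by simp
  finally show ?thesis .
qed

lemma (in prob_space) second_moment_le_prob_pos:
  fixes f :: "'a \<Rightarrow> real"
  assumes f: "integrable M f" and f2: "integrable M (\<lambda>x. (f x)\<^sup>2)"
    and pos: "expectation f > 0"
  shows "(expectation f)\<^sup>2 / expectation (\<lambda>x. (f x)\<^sup>2) \<le> prob {x\<in>space M. f x > 0}"
proof -
  let ?m1 = "expectation f" and ?m2 = "expectation (\<lambda>x. (f x)\<^sup>2)"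
    and ?p = "prob {x\<in>space M. f x > 0}"
  have "?m2 \<ge> 0" by simp
  then consider "?m2 = 0" | "?m2 > 0" by linarith
  then show ?thesis
  proof cases
    case 1
    \<comment> \<open>the left-hand side is x / 0 = 0\<close>
    then show ?thesis by simp
  next
    case 2
    have "?m1 \<le> ?m1/2 + ?m2/?m1/2 * ?p"
      using expectation_le_second_moment_prob_pos[OF f f2, of "?m2/?m1"] pos 2 by simp
    then have "?m1 * ?m1 \<le> ?m2 * ?p" using pos by (simp add: field_simps)
    with 2 show ?thesis by (simp add: field_simps power2_eq_square)
  qed
qed

lemma abs_margin_le_1:
  assumes "prob_space Q" and "finite Ys" and "Ys - {y} \<noteq> {}"
  shows "\<bar>vote Q x y - Max ((\<lambda>c. vote Q x c) ` (Ys - {y}))\<bar> \<le> 1"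
proof -
  have "Max ((\<lambda>c. vote Q x c) ` (Ys - {y})) \<in> (\<lambda>c. vote Q x c) ` (Ys - {y})"
    using assms(2,3) by (intro Max_in) auto
  then obtain d where "Max ((\<lambda>c. vote Q x c) ` (Ys - {y})) = vote Q x d" by auto
  moreover have "0 \<le> vote Q x c \<and> vote Q x c \<le> 1" for c
    unfolding vote_def using prob_space.prob_le_1[OF assms(1)] by simp
  ultimately show ?thesis by (smt (verit))
qed

lemma margin_bounded:
  assumes "prob_space Q" and "K \<ge> 2"
  shows "\<bar>margin Q K x y\<bar> \<le> 1"
proof -
  have "(if y = 1 then 2 else 1) \<in> {1..K} - {y}" using assms(2) by auto
  then have "{1..K} - {y} \<noteq> {}" by blast
  then show ?thesis unfolding margin_def by (intro abs_margin_le_1 assms(1)) auto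
qed

lemma majority_vote_error_margin_nonpos:
  assumes "is_majority_vote Q K Xs B" and "x \<in> Xs" and "y \<in> {1..K}" and "B x \<noteq> y"
  shows "margin Q K x y \<le> 0"
proof -
  have B: "B x \<in> {1..K}" "\<forall>c\<in>{1..K}. vote Q x c \<le> vote Q x (B x)"
    using assms(1,2) unfolding is_majority_vote_def by auto
  have "vote Q x (B x) \<le> Max ((\<lambda>c. vote Q x c) ` ({1..K} - {y}))"
    using B(1) assms(4) by (intro Max_ge) auto
  moreover have "vote Q x y \<le> vote Q x (B x)" using B(2) assms(3) by auto
  ultimately show ?thesis unfolding margin_def by simp
qed

theorem theorem1:
  fixes Xs :: "(real ^ 'd) set"
    and K :: nat
    and H :: "((real ^ 'd) \<Rightarrow> nat) set"
    and Q :: "((real ^ 'd) \<Rightarrow> nat) measure"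
    and P :: "((real ^ 'd) \<times> nat) measure"
    and B :: "(real ^ 'd) \<Rightarrow> nat"
  assumes K2: "K \<ge> 2"
    and H_class: "\<forall>h\<in>H. \<forall>x\<in>Xs. h x \<in> {1..K}"
    and Q_prob: "prob_space Q"
    and Q_on_H: "space Q \<subseteq> H"
    and Q_meas: "\<forall>x\<in>Xs. \<forall>c. {h \<in> space Q. h x = c} \<in> sets Q"
    and P_prob: "prob_space P"
    and P_support: "AE z in P. fst z \<in> Xs \<and> snd z \<in> {1..K}"
    and M_meas: "(\<lambda>z. margin Q K (fst z) (snd z)) \<in> borel_measurable P"
    and B_bayes: "is_majority_vote Q K Xs B"
    and B_meas: "{z \<in> space P. B (fst z) \<noteq> snd z} \<in> sets P"
    and mu1_pos: "(\<integral>z. margin Q K (fst z) (snd z) \<partial>P) > 0"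
  shows "measure P {z \<in> space P. B (fst z) \<noteq> snd z}
           \<le> 1 - (\<integral>z. margin Q K (fst z) (snd z) \<partial>P)\<^sup>2
                 / (\<integral>z. (margin Q K (fst z) (snd z))\<^sup>2 \<partial>P)"
proof -
  interpret P: prob_space P by (rule P_prob)
  define M where "M = (\<lambda>z. margin Q K (fst z) (snd z))"
  define A where "A = {z \<in> space P. M z > 0}"
  have bounded: "\<bar>M z\<bar> \<le> 1" for z unfolding M_def by (rule margin_bounded[OF Q_prob K2])
  have A_event: "A \<in> P.events" unfolding A_def using M_meas unfolding M_def by measurable
  have "integrable P M" "integrable P (\<lambda>z. (M z)\<^sup>2)"
    using bounded M_meas unfolding M_def
    by (auto intro!: P.integrable_const_bound[where B=1] simp: abs_square_le_1)
  from P.second_moment_le_prob_pos[OF this] mu1_pos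
  have lower: "(\<integral>z. M z \<partial>P)\<^sup>2 / (\<integral>z. (M z)\<^sup>2 \<partial>P) \<le> P.prob A"
    unfolding A_def M_def by simp
  have "AE z in P. z \<in> {z \<in> space P. B (fst z) \<noteq> snd z} \<longrightarrow> z \<in> space P - A"
    using P_support
    by eventually_elim
      (auto simp: A_def M_def not_less intro: majority_vote_error_margin_nonpos[OF B_bayes])
  then have "measure P {z \<in> space P. B (fst z) \<noteq> snd z} \<le> 1 - P.prob A"
    using P.finite_measure_mono_AE[of _ "space P - A"] P.prob_compl[OF A_event] A_event by auto
  with lower show ?thesis unfolding M_def by simp
qed

end
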